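(* Let $X, Y$ be Polish spaces equipped with Borel probability measures $\mu$ and $\nu$, and let $c: X\times Y\to[0,\infty]$ be Borel measurable. Then $P^{\mathrm{rel}}\ge D$.
   Context: For $0\le\varepsilon\le1$, let $\Pi^{\varepsilon}(\mu,\nu)$ be the set of non-negative Borel measures $\pi$ on $X\times Y$ with total mass $\pi(X\times Y)\ge 1-\varepsilon$ whose marginals satisfy $p_X(\pi)\le\mu$ and $p_Y(\pi)\le\nu$. Set $P^{\varepsilon}=\inf\{\int c\,d\pi : \pi\in\Pi^{\varepsilon}(\mu,\nu)\}$ and $P^{\mathrm{rel}}=\lim_{\varepsilon\to0}P^{\varepsilon}$. Let $D=\sup\{\int_X\varphi\,d\mu+\int_Y\psi\,d\nu\}$, where the supremum runs over all $\mu$-integrable $\varphi:X\to[-\infty,\infty)$ and $\nu$-integrable $\psi:Y\to[-\infty,\infty)$ with $\varphi(x)+\psi(y)\le c(x,y)$ for all $(x,y)\in X\times Y$. *)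

theory Defs
  imports "HOL-Analysis.Analysis"
begin

definition Pi_eps :: "'a::polish_space measure \<Rightarrow> 'b::polish_space measure \<Rightarrow> real
    \<Rightarrow> ('a \<times> 'b) measure set" where
  "Pi_eps \<mu> \<nu> \<epsilon> = {\<pi>. sets \<pi> = sets borel
      \<and> emeasure \<pi> (space \<pi>) \<ge> ennreal (1 - \<epsilon>)
      \<and> (\<forall>A\<in>sets borel. emeasure \<pi> (fst -` A) \<le> emeasure \<mu> A)
      \<and> (\<forall>B\<in>sets borel. emeasure \<pi> (snd -` B) \<le> emeasure \<nu> B)}"

definition P_eps :: "'a::polish_space measure \<Rightarrow> 'b::polish_space measure
    \<Rightarrow> ('a \<times> 'b \<Rightarrow> ennreal) \<Rightarrow> real \<Rightarrow> ennreal" where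
  "P_eps \<mu> \<nu> c \<epsilon> = (INF \<pi>\<in>Pi_eps \<mu> \<nu> \<epsilon>. \<integral>\<^sup>+ z. c z \<partial>\<pi>)"

definition P_rel :: "'a::polish_space measure \<Rightarrow> 'b::polish_space measure
    \<Rightarrow> ('a \<times> 'b \<Rightarrow> ennreal) \<Rightarrow> ennreal" where
  "P_rel \<mu> \<nu> c = Lim (at_right (0::real)) (P_eps \<mu> \<nu> c)"

definition ereal_integrable :: "'a measure \<Rightarrow> ('a \<Rightarrow> ereal) \<Rightarrow> bool" where
  "ereal_integrable M f \<longleftrightarrow> f \<in> borel_measurable M
      \<and> (\<integral>\<^sup>+ x. e2ennreal (f x) \<partial>M) < \<infinity> \<and> (\<integral>\<^sup>+ x. e2ennreal (- f x) \<partial>M) < \<infinity>"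

definition ereal_integral :: "'a measure \<Rightarrow> ('a \<Rightarrow> ereal) \<Rightarrow> ereal" where
  "ereal_integral M f = enn2ereal (\<integral>\<^sup>+ x. e2ennreal (f x) \<partial>M)
      - enn2ereal (\<integral>\<^sup>+ x. e2ennreal (- f x) \<partial>M)"

definition D_dual :: "'a::polish_space measure \<Rightarrow> 'b::polish_space measure
    \<Rightarrow> ('a \<times> 'b \<Rightarrow> ennreal) \<Rightarrow> ereal" where
  "D_dual \<mu> \<nu> c = (SUP (\<phi>, \<psi>) \<in> {(\<phi>, \<psi>). ereal_integrable \<mu> \<phi> \<and> ereal_integrable \<nu> \<psi>
          \<and> (\<forall>x. \<phi> x \<noteq> \<infinity>) \<and> (\<forall>y. \<psi> y \<noteq> \<infinity>)
          \<and> (\<forall>x y. \<phi> x + \<psi> y \<le> enn2ereal (c (x, y)))}.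
        ereal_integral \<mu> \<phi> + ereal_integral \<nu> \<psi>)"

end

theory Submission
  imports Defs
begin

text \<open>Write an admissible pair as \<open>\<phi> = p - n\<close>, \<open>\<psi> = q - r\<close> with non-negative parts, so that
  \<open>p x + q y \<le> c (x, y) + n x + r y\<close>. Integrating this against a partial plan \<open>\<pi>\<close> and using
  that its marginals are dominated by \<open>\<mu>\<close> and \<open>\<nu>\<close> controls \<open>n\<close> and \<open>r\<close>. For \<open>p\<close> and \<open>q\<close>
  the domination goes the wrong way, but if they are bounded by \<open>m\<close>, the missing mass of
  \<open>\<pi>\<close> (at most \<open>\<epsilon>\<close>) costs at most \<open>m \<epsilon>\<close>. Letting \<open>\<epsilon> \<rightarrow> 0\<close> and then removing the bound by
  monotone convergence gives \<open>\<integral>\<phi> d\<mu> + \<integral>\<psi> d\<nu> \<le> P_rel\<close>.\<close>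

lemma ennreal_le_INF_add:
  fixes x c :: ennreal
  assumes "\<And>i. i \<in> I \<Longrightarrow> x \<le> f i + c"
  shows "x \<le> (INF i\<in>I. f i) + c"
proof (rule ennreal_le_epsilon)
  fix e :: real assume fin: "(INF i\<in>I. f i) + c < top" and "0 < e"
  then have "(INF i\<in>I. f i) \<noteq> top"
    by (metis add_top_left_ennreal less_imp_neq)
  then have "(INF i\<in>I. f i) + 0 < (INF i\<in>I. f i) + ennreal e"
    using \<open>0 < e\<close>
    by (simp only: ennreal_add_left_cancel_less infinity_ennreal_def ennreal_less_zero_iff) blast
  then obtain i where "i \<in> I" "f i < (INF i\<in>I. f i) + ennreal e"
    unfolding add_0_right INF_less_iff by blast
  then have "x \<le> (INF i\<in>I. f i) + ennreal e + c"
    using assms[of i] by (meson add_right_mono less_imp_le order_trans)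
  then show "x \<le> (INF i\<in>I. f i) + c + ennreal e"
    by (simp add: ac_simps)
qed

lemma one_le_ennreal_diff_add: "1 \<le> ennreal (1 - \<epsilon>) + ennreal \<epsilon>"
proof -
  consider "\<epsilon> \<le> 0" | "1 \<le> \<epsilon>" | "0 \<le> \<epsilon>" "\<epsilon> \<le> 1" by linarith
  then show ?thesis
  proof cases
    case 1
    then have "1 \<le> ennreal (1 - \<epsilon>)" using ennreal_leI[of 1 "1 - \<epsilon>"] by simp
    then show ?thesis by (simp add: add_increasing2)
  next
    case 2
    then have "1 \<le> ennreal \<epsilon>" using ennreal_leI[of 1 \<epsilon>] by simp
    then show ?thesis by (simp add: add_increasing)
  next
    case 3
    then show ?thesis by (simp flip: ennreal_plus)
  qed
qed

lemma e2ennreal_add_le_add_negative_parts: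
  fixes a b :: ereal and z :: ennreal
  assumes "a + b \<le> enn2ereal z" "a \<noteq> \<infinity>" "b \<noteq> \<infinity>"
  shows "e2ennreal a + e2ennreal b \<le> z + e2ennreal (- a) + e2ennreal (- b)"
proof (cases "a = -\<infinity> \<or> b = -\<infinity> \<or> z = top")
  case False
  then obtain x y w where "a = ereal x" "b = ereal y" "z = ennreal w" "0 \<le> w"
    using assms by (cases a; cases b; cases z rule: ennreal_cases) auto
  moreover have "ennreal (max 0 x + max 0 y) \<le> ennreal (w + max 0 (- x) + max 0 (- y))"
    using assms \<open>a = ereal x\<close> \<open>b = ereal y\<close> \<open>z = ennreal w\<close> \<open>0 \<le> w\<close>
    by (intro ennreal_leI) (auto simp: max_def)
  ultimately show ?thesis
    by (simp add: ennreal_plus ennreal_max_0)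
qed auto

lemma enn2ereal_diff_add_diff_le:
  fixes a b c d s :: ennreal
  assumes "a + b \<le> s + c + d" "c \<noteq> top" "d \<noteq> top"
  shows "(enn2ereal a - enn2ereal c) + (enn2ereal b - enn2ereal d) \<le> enn2ereal s"
  using assms
  by (cases a rule: ennreal_cases; cases b rule: ennreal_cases; cases c rule: ennreal_cases;
      cases d rule: ennreal_cases; cases s rule: ennreal_cases) (auto simp: top_unique simp flip: ennreal_plus)

lemma incseq_nn_integral_min_of_nat: "incseq (\<lambda>k. \<integral>\<^sup>+ x. min (f x) (of_nat k) \<partial>M)"
  by (intro incseq_SucI nn_integral_mono min.mono) auto

lemma nn_integral_min_of_nat_SUP:
  assumes "f \<in> borel_measurable M"
  shows "(SUP k. \<integral>\<^sup>+ x. min (f x) (of_nat k) \<partial>M) = (\<integral>\<^sup>+ x. f x \<partial>M)"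
proof -
  have "(SUP k. min (f x) (of_nat k)) = f x" for x
    using inf_SUP[of "f x" of_nat UNIV] by (simp add: inf_min ennreal_SUP_of_nat_eq_top)
  moreover have "incseq (\<lambda>k x. min (f x) (of_nat k :: ennreal))"
    by (intro incseq_SucI le_funI min.mono) auto
  ultimately show ?thesis
    using assms by (subst nn_integral_monotone_convergence_SUP[symmetric]) auto
qed

lemma nn_integral_comp_le_dominated:
  assumes f: "f \<in> measurable M N" and sets: "sets \<mu> = sets N"
    and dom: "\<And>A. A \<in> sets N \<Longrightarrow> emeasure M (f -` A \<inter> space M) \<le> emeasure \<mu> A"
    and g: "g \<in> borel_measurable N"
  shows "(\<integral>\<^sup>+ z. g (f z) \<partial>M) \<le> (\<integral>\<^sup>+ x. g x \<partial>\<mu>)"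
proof -
  have "emeasure (distr M N f) A \<le> emeasure \<mu> A" for A
    using dom[of A] sets by (cases "A \<in> sets N") (auto simp: emeasure_distr[OF f] emeasure_notin_sets)
  then have "distr M N f \<le> \<mu>"
    using sets sets_eq_imp_space_eq[OF sets] by (auto simp: le_measure_iff le_fun_def)
  then have "(\<integral>\<^sup>+ x. g x \<partial>distr M N f) \<le> (\<integral>\<^sup>+ x. g x \<partial>\<mu>)"
    by (intro nn_integral_mono_measure) (simp add: sets)
  then show ?thesis
    using f g by (simp add: nn_integral_distr)
qed

lemma nn_integral_le_comp_add_deficit:
  fixes m \<epsilon> :: ennreal
  assumes f: "f \<in> measurable M N" and sets: "sets \<mu> = sets N"
    and dom: "\<And>A. A \<in> sets N \<Longrightarrow> emeasure M (f -` A \<inter> space M) \<le> emeasure \<mu> A"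
    and prob: "emeasure \<mu> (space \<mu>) = 1" and mass: "1 \<le> emeasure M (space M) + \<epsilon>"
    and g: "g \<in> borel_measurable N" and bound: "\<And>x. g x \<le> m" and "m \<noteq> top"
  shows "(\<integral>\<^sup>+ x. g x \<partial>\<mu>) \<le> (\<integral>\<^sup>+ z. g (f z) \<partial>M) + m * \<epsilon>"
proof -
  \<comment> \<open>Domination applies to the complement \<open>h = m - g\<close>, whose finite \<open>\<mu>\<close>-integral cancels.\<close>
  define h where "h x = m - g x" for x
  have h: "h \<in> borel_measurable N"
    unfolding h_def using g by measurable
  have gh: "g x + h x = m" for x
    unfolding h_def using bound[of x] by (simp add: add_diff_inverse_ennreal)
  have g\<mu>: "g \<in> borel_measurable \<mu>" and h\<mu>: "h \<in> borel_measurable \<mu>"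
    using g h by (simp_all add: measurable_cong_sets[OF sets refl])
  have total_\<mu>: "(\<integral>\<^sup>+ x. g x \<partial>\<mu>) + (\<integral>\<^sup>+ x. h x \<partial>\<mu>) = m"
    using prob by (simp add: nn_integral_add[OF g\<mu> h\<mu>, symmetric] gh)
  have total_M: "(\<integral>\<^sup>+ z. g (f z) \<partial>M) + (\<integral>\<^sup>+ z. h (f z) \<partial>M) = m * emeasure M (space M)"
    using f g h by (simp add: nn_integral_add[symmetric] gh)
  have "(\<integral>\<^sup>+ x. h x \<partial>\<mu>) + (\<integral>\<^sup>+ x. g x \<partial>\<mu>) = m * 1"
    using total_\<mu> by (simp add: add.commute)
  also have "\<dots> \<le> m * emeasure M (space M) + m * \<epsilon>"
    using mult_left_mono[OF mass, of m] by (simp add: distrib_left)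
  also have "\<dots> \<le> (\<integral>\<^sup>+ x. h x \<partial>\<mu>) + ((\<integral>\<^sup>+ z. g (f z) \<partial>M) + m * \<epsilon>)"
    using nn_integral_comp_le_dominated[OF f sets dom h]
    by (simp add: total_M[symmetric] ac_simps add_mono)
  finally show ?thesis
    using total_\<mu> \<open>m \<noteq> top\<close> by (subst (asm) ennreal_add_left_cancel_le) (auto simp: top_unique)
qed

lemma Pi_eps_space:
  assumes "\<pi> \<in> Pi_eps \<mu> \<nu> \<epsilon>"
  shows "sets \<pi> = sets borel" "space \<pi> = UNIV"
  using assms sets_eq_imp_space_eq[of \<pi> borel] by (auto simp: Pi_eps_def)

lemma Pi_eps_measurable_fst: "\<pi> \<in> Pi_eps \<mu> \<nu> \<epsilon> \<Longrightarrow> fst \<in> measurable \<pi> borel"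
  using measurable_cong_sets[OF Pi_eps_space(1) refl] by (metis borel_prod measurable_fst)

lemma Pi_eps_measurable_snd: "\<pi> \<in> Pi_eps \<mu> \<nu> \<epsilon> \<Longrightarrow> snd \<in> measurable \<pi> borel"
  using measurable_cong_sets[OF Pi_eps_space(1) refl] by (metis borel_prod measurable_snd)

lemma Pi_eps_fst_marginal_le:
  "\<pi> \<in> Pi_eps \<mu> \<nu> \<epsilon> \<Longrightarrow> A \<in> sets borel \<Longrightarrow> emeasure \<pi> (fst -` A \<inter> space \<pi>) \<le> emeasure \<mu> A"
  by (simp add: Pi_eps_space(2)) (simp add: Pi_eps_def)

lemma Pi_eps_snd_marginal_le:
  "\<pi> \<in> Pi_eps \<mu> \<nu> \<epsilon> \<Longrightarrow> B \<in> sets borel \<Longrightarrow> emeasure \<pi> (snd -` B \<inter> space \<pi>) \<le> emeasure \<nu> B"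
  by (simp add: Pi_eps_space(2)) (simp add: Pi_eps_def)

lemma Pi_eps_total_mass:
  assumes "\<pi> \<in> Pi_eps \<mu> \<nu> \<epsilon>"
  shows "1 \<le> emeasure \<pi> (space \<pi>) + ennreal \<epsilon>"
proof -
  have "ennreal (1 - \<epsilon>) \<le> emeasure \<pi> (space \<pi>)"
    using assms by (simp add: Pi_eps_def)
  then show ?thesis
    using one_le_ennreal_diff_add[of \<epsilon>] by (meson add_right_mono order_trans)
qed

lemma Pi_eps_nn_integral_fst_le:
  assumes "\<pi> \<in> Pi_eps \<mu> \<nu> \<epsilon>" "sets \<mu> = sets borel" "g \<in> borel_measurable borel"
  shows "(\<integral>\<^sup>+ z. g (fst z) \<partial>\<pi>) \<le> (\<integral>\<^sup>+ x. g x \<partial>\<mu>)"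
  by (rule nn_integral_comp_le_dominated[OF Pi_eps_measurable_fst[OF assms(1)] assms(2)
        Pi_eps_fst_marginal_le[OF assms(1)] assms(3)])

lemma Pi_eps_nn_integral_snd_le:
  assumes "\<pi> \<in> Pi_eps \<mu> \<nu> \<epsilon>" "sets \<nu> = sets borel" "g \<in> borel_measurable borel"
  shows "(\<integral>\<^sup>+ z. g (snd z) \<partial>\<pi>) \<le> (\<integral>\<^sup>+ y. g y \<partial>\<nu>)"
  by (rule nn_integral_comp_le_dominated[OF Pi_eps_measurable_snd[OF assms(1)] assms(2)
        Pi_eps_snd_marginal_le[OF assms(1)] assms(3)])

lemma Pi_eps_nn_integral_le_fst_add:
  assumes "\<pi> \<in> Pi_eps \<mu> \<nu> \<epsilon>" "sets \<mu> = sets borel" "emeasure \<mu> (space \<mu>) = 1"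
    and "g \<in> borel_measurable borel" "\<And>x. g x \<le> ennreal m"
  shows "(\<integral>\<^sup>+ x. g x \<partial>\<mu>) \<le> (\<integral>\<^sup>+ z. g (fst z) \<partial>\<pi>) + ennreal m * ennreal \<epsilon>"
  by (rule nn_integral_le_comp_add_deficit[OF Pi_eps_measurable_fst[OF assms(1)] assms(2)
        Pi_eps_fst_marginal_le[OF assms(1)] assms(3) Pi_eps_total_mass[OF assms(1)] assms(4,5)]) simp_all

lemma Pi_eps_nn_integral_le_snd_add:
  assumes "\<pi> \<in> Pi_eps \<mu> \<nu> \<epsilon>" "sets \<nu> = sets borel" "emeasure \<nu> (space \<nu>) = 1"
    and "g \<in> borel_measurable borel" "\<And>y. g y \<le> ennreal m"
  shows "(\<integral>\<^sup>+ y. g y \<partial>\<nu>) \<le> (\<integral>\<^sup>+ z. g (snd z) \<partial>\<pi>) + ennreal m * ennreal \<epsilon>"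
  by (rule nn_integral_le_comp_add_deficit[OF Pi_eps_measurable_snd[OF assms(1)] assms(2)
        Pi_eps_snd_marginal_le[OF assms(1)] assms(3) Pi_eps_total_mass[OF assms(1)] assms(4,5)]) simp_all

lemma Pi_eps_mono: "\<epsilon> \<le> \<epsilon>' \<Longrightarrow> Pi_eps \<mu> \<nu> \<epsilon> \<subseteq> Pi_eps \<mu> \<nu> \<epsilon>'"
  unfolding Pi_eps_def by (auto intro: order_trans[OF ennreal_leI[of "1 - \<epsilon>'" "1 - \<epsilon>"]])

lemma P_eps_antimono: "\<epsilon> \<le> \<epsilon>' \<Longrightarrow> P_eps \<mu> \<nu> c \<epsilon>' \<le> P_eps \<mu> \<nu> c \<epsilon>"
  unfolding P_eps_def by (intro INF_superset_mono Pi_eps_mono) auto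

lemma P_rel_eq_SUP: "P_rel \<mu> \<nu> c = (SUP \<epsilon>\<in>{0<..}. P_eps \<mu> \<nu> c \<epsilon>)"
proof -
  define S where "S = (SUP \<epsilon>\<in>{0<..}. P_eps \<mu> \<nu> c \<epsilon>)"
  have "(P_eps \<mu> \<nu> c \<longlongrightarrow> S) (at_right 0)"
  proof (rule order_tendstoI)
    fix a assume "a < S"
    then obtain \<epsilon>\<^sub>0 where "0 < \<epsilon>\<^sub>0" "a < P_eps \<mu> \<nu> c \<epsilon>\<^sub>0"
      unfolding S_def less_SUP_iff by auto
    then show "\<forall>\<^sub>F \<epsilon> in at_right 0. a < P_eps \<mu> \<nu> c \<epsilon>"
      unfolding eventually_at_right[OF \<open>0 < \<epsilon>\<^sub>0\<close>]
      by (intro exI[of _ \<epsilon>\<^sub>0]) (auto intro: less_le_trans[OF _ P_eps_antimono])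
  next
    fix a assume "S < a"
    have "\<forall>\<^sub>F \<epsilon> in at_right (0::real). 0 < \<epsilon>"
      by (rule eventually_at_right_less)
    then show "\<forall>\<^sub>F \<epsilon> in at_right 0. P_eps \<mu> \<nu> c \<epsilon> < a"
      by eventually_elim (use \<open>S < a\<close> in \<open>auto simp: S_def intro: le_less_trans[OF SUP_upper]\<close>)
  qed
  then show ?thesis
    unfolding P_rel_def S_def by (intro tendsto_Lim) auto
qed

lemma P_eps_le_P_rel: "0 < \<epsilon> \<Longrightarrow> P_eps \<mu> \<nu> c \<epsilon> \<le> P_rel \<mu> \<nu> c"
  unfolding P_rel_eq_SUP by (rule SUP_upper) simp

lemma Pi_eps_potentials_le:
  fixes p n :: "'a::polish_space \<Rightarrow> ennreal" and q r :: "'b::polish_space \<Rightarrow> ennreal"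
  assumes \<pi>: "\<pi> \<in> Pi_eps \<mu> \<nu> \<epsilon>"
    and \<mu>: "sets \<mu> = sets borel" "emeasure \<mu> (space \<mu>) = 1"
    and \<nu>: "sets \<nu> = sets borel" "emeasure \<nu> (space \<nu>) = 1"
    and c: "c \<in> borel_measurable borel"
    and meas: "p \<in> borel_measurable borel" "q \<in> borel_measurable borel"
      "n \<in> borel_measurable borel" "r \<in> borel_measurable borel"
    and bound: "\<And>x. p x \<le> ennreal m" "\<And>y. q y \<le> ennreal m"
    and le: "\<And>x y. p x + q y \<le> c (x, y) + n x + r y"
  shows "(\<integral>\<^sup>+ x. p x \<partial>\<mu>) + (\<integral>\<^sup>+ y. q y \<partial>\<nu>)
    \<le> (\<integral>\<^sup>+ z. c z \<partial>\<pi>) + (\<integral>\<^sup>+ x. n x \<partial>\<mu>) + (\<integral>\<^sup>+ y. r y \<partial>\<nu>) + 2 * ennreal m * ennreal \<epsilon>"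
proof -
  note fst = measurable_compose[OF Pi_eps_measurable_fst[OF \<pi>]]
  note snd = measurable_compose[OF Pi_eps_measurable_snd[OF \<pi>]]
  have c\<pi>: "c \<in> borel_measurable \<pi>"
    using c measurable_cong_sets[OF Pi_eps_space(1)[OF \<pi>] refl] by blast
  have "(\<integral>\<^sup>+ x. p x \<partial>\<mu>) + (\<integral>\<^sup>+ y. q y \<partial>\<nu>)
      \<le> (\<integral>\<^sup>+ z. p (fst z) \<partial>\<pi>) + ennreal m * ennreal \<epsilon>
        + ((\<integral>\<^sup>+ z. q (snd z) \<partial>\<pi>) + ennreal m * ennreal \<epsilon>)"
    by (intro add_mono Pi_eps_nn_integral_le_fst_add[OF \<pi> \<mu> meas(1) bound(1)]
        Pi_eps_nn_integral_le_snd_add[OF \<pi> \<nu> meas(2) bound(2)])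
  also have "\<dots> = (\<integral>\<^sup>+ z. p (fst z) + q (snd z) \<partial>\<pi>) + 2 * ennreal m * ennreal \<epsilon>"
    using fst[OF meas(1)] snd[OF meas(2)]
    by (simp add: nn_integral_add mult_2 mult_2_right distrib_left ac_simps)
  also have "\<dots> \<le> (\<integral>\<^sup>+ z. c z + n (fst z) + r (snd z) \<partial>\<pi>) + 2 * ennreal m * ennreal \<epsilon>"
    using le by (intro add_right_mono nn_integral_mono) (metis prod.collapse)
  also have "\<dots> = (\<integral>\<^sup>+ z. c z \<partial>\<pi>) + (\<integral>\<^sup>+ z. n (fst z) \<partial>\<pi>) + (\<integral>\<^sup>+ z. r (snd z) \<partial>\<pi>)
      + 2 * ennreal m * ennreal \<epsilon>"
    using c\<pi> fst[OF meas(3)] snd[OF meas(4)] by (simp add: nn_integral_add)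
  also have "\<dots> \<le> (\<integral>\<^sup>+ z. c z \<partial>\<pi>) + (\<integral>\<^sup>+ x. n x \<partial>\<mu>) + (\<integral>\<^sup>+ y. r y \<partial>\<nu>)
      + 2 * ennreal m * ennreal \<epsilon>"
    by (intro add_mono order_refl Pi_eps_nn_integral_fst_le[OF \<pi> \<mu>(1) meas(3)]
        Pi_eps_nn_integral_snd_le[OF \<pi> \<nu>(1) meas(4)])
  finally show ?thesis .
qed

lemma bounded_potentials_le_P_rel:
  fixes p n :: "'a::polish_space \<Rightarrow> ennreal" and q r :: "'b::polish_space \<Rightarrow> ennreal"
  assumes \<mu>: "sets \<mu> = sets borel" "emeasure \<mu> (space \<mu>) = 1"
    and \<nu>: "sets \<nu> = sets borel" "emeasure \<nu> (space \<nu>) = 1"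
    and c: "c \<in> borel_measurable borel"
    and meas: "p \<in> borel_measurable borel" "q \<in> borel_measurable borel"
      "n \<in> borel_measurable borel" "r \<in> borel_measurable borel"
    and bound: "\<And>x. p x \<le> ennreal m" "\<And>y. q y \<le> ennreal m" and "0 \<le> m"
    and le: "\<And>x y. p x + q y \<le> c (x, y) + n x + r y"
  shows "(\<integral>\<^sup>+ x. p x \<partial>\<mu>) + (\<integral>\<^sup>+ y. q y \<partial>\<nu>)
    \<le> P_rel \<mu> \<nu> c + (\<integral>\<^sup>+ x. n x \<partial>\<mu>) + (\<integral>\<^sup>+ y. r y \<partial>\<nu>)"
proof (rule ennreal_le_epsilon)
  fix e :: real assume "0 < e"
  define \<epsilon> where "\<epsilon> = e / (2 * m + 1)"
  have "0 < \<epsilon>"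
    using \<open>0 < e\<close> \<open>0 \<le> m\<close> by (simp add: \<epsilon>_def)
  have "2 * m * \<epsilon> \<le> e"
    using \<open>0 < e\<close> \<open>0 \<le> m\<close> by (simp add: \<epsilon>_def field_simps)
  then have deficit: "2 * ennreal m * ennreal \<epsilon> \<le> ennreal e"
    using \<open>0 \<le> m\<close> \<open>0 < \<epsilon>\<close> ennreal_leI[of "2 * m * \<epsilon>" e] by (simp add: ennreal_mult)
  have "(\<integral>\<^sup>+ x. p x \<partial>\<mu>) + (\<integral>\<^sup>+ y. q y \<partial>\<nu>)
      \<le> P_eps \<mu> \<nu> c \<epsilon> + ((\<integral>\<^sup>+ x. n x \<partial>\<mu>) + (\<integral>\<^sup>+ y. r y \<partial>\<nu>) + 2 * ennreal m * ennreal \<epsilon>)"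
    unfolding P_eps_def
    by (rule ennreal_le_INF_add) (use Pi_eps_potentials_le[OF _ \<mu> \<nu> c meas bound le] in \<open>simp add: ac_simps\<close>)
  also have "\<dots> \<le> P_rel \<mu> \<nu> c + ((\<integral>\<^sup>+ x. n x \<partial>\<mu>) + (\<integral>\<^sup>+ y. r y \<partial>\<nu>) + ennreal e)"
    by (intro add_mono order_refl P_eps_le_P_rel \<open>0 < \<epsilon>\<close> deficit)
  finally show "(\<integral>\<^sup>+ x. p x \<partial>\<mu>) + (\<integral>\<^sup>+ y. q y \<partial>\<nu>)
      \<le> P_rel \<mu> \<nu> c + (\<integral>\<^sup>+ x. n x \<partial>\<mu>) + (\<integral>\<^sup>+ y. r y \<partial>\<nu>) + ennreal e"
    by (simp add: ac_simps)
qed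

lemma potentials_le_P_rel:
  fixes p n :: "'a::polish_space \<Rightarrow> ennreal" and q r :: "'b::polish_space \<Rightarrow> ennreal"
  assumes \<mu>: "sets \<mu> = sets borel" "emeasure \<mu> (space \<mu>) = 1"
    and \<nu>: "sets \<nu> = sets borel" "emeasure \<nu> (space \<nu>) = 1"
    and c: "c \<in> borel_measurable borel"
    and meas: "p \<in> borel_measurable borel" "q \<in> borel_measurable borel"
      "n \<in> borel_measurable borel" "r \<in> borel_measurable borel"
    and le: "\<And>x y. p x + q y \<le> c (x, y) + n x + r y"
  shows "(\<integral>\<^sup>+ x. p x \<partial>\<mu>) + (\<integral>\<^sup>+ y. q y \<partial>\<nu>)
    \<le> P_rel \<mu> \<nu> c + (\<integral>\<^sup>+ x. n x \<partial>\<mu>) + (\<integral>\<^sup>+ y. r y \<partial>\<nu>)"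
proof -
  have p\<mu>: "p \<in> borel_measurable \<mu>" and q\<nu>: "q \<in> borel_measurable \<nu>"
    using meas by (simp_all add: measurable_cong_sets[OF \<mu>(1) refl] measurable_cong_sets[OF \<nu>(1) refl])
  have "(\<integral>\<^sup>+ x. p x \<partial>\<mu>) + (\<integral>\<^sup>+ y. q y \<partial>\<nu>)
      = (SUP k. (\<integral>\<^sup>+ x. min (p x) (of_nat k) \<partial>\<mu>) + (\<integral>\<^sup>+ y. min (q y) (of_nat k) \<partial>\<nu>))"
    by (simp add: ennreal_SUP_add incseq_nn_integral_min_of_nat
        nn_integral_min_of_nat_SUP[OF p\<mu>] nn_integral_min_of_nat_SUP[OF q\<nu>])
  also have "\<dots> \<le> P_rel \<mu> \<nu> c + (\<integral>\<^sup>+ x. n x \<partial>\<mu>) + (\<integral>\<^sup>+ y. r y \<partial>\<nu>)"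
  proof (rule SUP_least)
    fix k :: nat
    have "min (p x) (of_nat k) + min (q y) (of_nat k) \<le> c (x, y) + n x + r y" for x y
      using le[of x y] by (meson add_mono min.cobounded1 order_trans)
    then show "(\<integral>\<^sup>+ x. min (p x) (of_nat k) \<partial>\<mu>) + (\<integral>\<^sup>+ y. min (q y) (of_nat k) \<partial>\<nu>)
        \<le> P_rel \<mu> \<nu> c + (\<integral>\<^sup>+ x. n x \<partial>\<mu>) + (\<integral>\<^sup>+ y. r y \<partial>\<nu>)"
      using meas
      by (intro bounded_potentials_le_P_rel[OF \<mu> \<nu> c, where m = "real k"])
        (auto simp: ennreal_of_nat_eq_real_of_nat)
  qed
  finally show ?thesis .
qed

lemma ereal_integral_add_le_P_rel:
  fixes \<phi> :: "'a::polish_space \<Rightarrow> ereal" and \<psi> :: "'b::polish_space \<Rightarrow> ereal"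
  assumes \<mu>: "sets \<mu> = sets borel" "emeasure \<mu> (space \<mu>) = 1"
    and \<nu>: "sets \<nu> = sets borel" "emeasure \<nu> (space \<nu>) = 1"
    and c: "c \<in> borel_measurable borel"
    and \<phi>: "ereal_integrable \<mu> \<phi>" "\<And>x. \<phi> x \<noteq> \<infinity>"
    and \<psi>: "ereal_integrable \<nu> \<psi>" "\<And>y. \<psi> y \<noteq> \<infinity>"
    and le: "\<And>x y. \<phi> x + \<psi> y \<le> enn2ereal (c (x, y))"
  shows "ereal_integral \<mu> \<phi> + ereal_integral \<nu> \<psi> \<le> enn2ereal (P_rel \<mu> \<nu> c)"
proof -
  have [measurable]: "\<phi> \<in> borel_measurable borel" "\<psi> \<in> borel_measurable borel"
    using \<phi>(1) \<psi>(1) measurable_cong_sets[OF \<mu>(1) refl] measurable_cong_sets[OF \<nu>(1) refl]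
    by (auto simp: ereal_integrable_def)
  have "(\<integral>\<^sup>+ x. e2ennreal (\<phi> x) \<partial>\<mu>) + (\<integral>\<^sup>+ y. e2ennreal (\<psi> y) \<partial>\<nu>)
      \<le> P_rel \<mu> \<nu> c + (\<integral>\<^sup>+ x. e2ennreal (- \<phi> x) \<partial>\<mu>) + (\<integral>\<^sup>+ y. e2ennreal (- \<psi> y) \<partial>\<nu>)"
    using le \<phi>(2) \<psi>(2)
    by (intro potentials_le_P_rel[OF \<mu> \<nu> c] e2ennreal_add_le_add_negative_parts) simp_all
  then show ?thesis
    using \<phi>(1) \<psi>(1) unfolding ereal_integral_def ereal_integrable_def
    by (intro enn2ereal_diff_add_diff_le) auto
qed

theorem proposition2p1:
  fixes \<mu> :: "'a::polish_space measure" and \<nu> :: "'b::polish_space measure"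
    and c :: "'a \<times> 'b \<Rightarrow> ennreal"
  assumes "sets \<mu> = sets borel" and "emeasure \<mu> (space \<mu>) = 1"
    and "sets \<nu> = sets borel" and "emeasure \<nu> (space \<nu>) = 1"
    and "c \<in> borel_measurable borel"
  shows "enn2ereal (P_rel \<mu> \<nu> c) \<ge> D_dual \<mu> \<nu> c"
  unfolding D_dual_def
proof (rule SUP_least, clarify)
  fix \<phi> \<psi>
  assume "ereal_integrable \<mu> \<phi>" "ereal_integrable \<nu> \<psi>" "\<forall>x. \<phi> x \<noteq> \<infinity>" "\<forall>y. \<psi> y \<noteq> \<infinity>"
    "\<forall>x y. \<phi> x + \<psi> y \<le> enn2ereal (c (x, y))"
  then show "ereal_integral \<mu> \<phi> + ereal_integral \<nu> \<psi> \<le> enn2ereal (P_rel \<mu> \<nu> c)"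
    by (intro ereal_integral_add_le_P_rel[OF assms]) auto
qed

end
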